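(* Let $n\geq2$ and let $\mathcal R(P_n)=u_1,\ldots,u_r$. Let $k$ be the smallest index such that $x_{n-1}\nmid u_k$. Then $(u_1,\ldots,u_{k-1}):(u_k)=(x_{n-1})$. Moreover, if $i>k$, then $$(u_1,\ldots,u_{i-1}):(u_i)=(x_{n-1})+(u_k,\ldots,u_{i-1}):(u_i).$$
   Context: Let $K$ be a field. For $m\geq 1$, $P_m$ is the path graph on vertices $x_1,\ldots,x_m$ with edges $\{x_i,x_{i+1}\}$. The cover ideal $J(P_m)$ is generated by the monomials $\prod_{x\in C}x$ with $C$ a minimal vertex cover of $P_m$. The rooted list $\mathcal R(P_m)$ is defined recursively: $\mathcal R(P_1)$ empty; $\mathcal R(P_2)=x_1,x_2$; $\mathcal R(P_3)=x_2,x_1x_3$; $\mathcal R(P_4)=x_1x_3,x_2x_3,x_2x_4$; for $m\geq5$, if $\mathcal R(P_{m-2})=u_1,\ldots,u_r$ and $\mathcal R(P_{m-3})=v_1,\ldots,v_s$, then $\mathcal R(P_m)=x_{m-1}u_1,\ldots,x_{m-1}u_r,x_mx_{m-2}v_1,\ldots,x_mx_{m-2}v_s$; it lists each minimal monomial generator of $J(P_m)$ once. *)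

theory Defs
  imports Main "HOL-Library.Poly_Mapping"
begin

type_synonym 'a mpoly = "(nat \<Rightarrow>\<^sub>0 nat) \<Rightarrow>\<^sub>0 'a"

definition xvar :: "nat \<Rightarrow> 'a::field mpoly" where
  "xvar i = Poly_Mapping.single (Poly_Mapping.single i 1) 1"

definition sqmono :: "nat set \<Rightarrow> 'a::field mpoly" where
  "sqmono S = (\<Prod>i\<in>S. xvar i)"

definition ideal_gen :: "'a::field mpoly set \<Rightarrow> 'a mpoly set" where
  "ideal_gen G = {p. \<exists>F c. finite F \<and> F \<subseteq> G \<and> p = (\<Sum>g\<in>F. c g * g)}"

definition ideal_sum :: "'a::field mpoly set \<Rightarrow> 'a mpoly set \<Rightarrow> 'a mpoly set" where
  "ideal_sum I J = {a + b | a b. a \<in> I \<and> b \<in> J}"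

definition ideal_colon :: "'a::field mpoly set \<Rightarrow> 'a mpoly set \<Rightarrow> 'a mpoly set" where
  "ideal_colon I J = {f. \<forall>g\<in>J. f * g \<in> I}"

text \<open>Rooted list of P_m, each monomial given by its support set.\<close>
fun rooted_sets :: "nat \<Rightarrow> nat set list" where
  "rooted_sets 0 = []"
| "rooted_sets (Suc 0) = []"
| "rooted_sets (Suc (Suc 0)) = [{1}, {2}]"
| "rooted_sets (Suc (Suc (Suc 0))) = [{2}, {1, 3}]"
| "rooted_sets (Suc (Suc (Suc (Suc 0)))) = [{1, 3}, {2, 3}, {2, 4}]"
| "rooted_sets (Suc (Suc (Suc (Suc (Suc k))))) =
     map (insert (k + 4)) (rooted_sets (k + 3))
     @ map (\<lambda>S. insert (k + 5) (insert (k + 3) S)) (rooted_sets (k + 2))"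

definition rooted_list :: "nat \<Rightarrow> 'a::field mpoly list" where
  "rooted_list m = map sqmono (rooted_sets m)"

end

theory Submission
  imports Defs
begin

text \<open>Let \<open>v = n - 1\<close> and let \<open>p(0)\<close> denote \<open>p\<close> with \<open>x\<^sub>v\<close> set to \<open>0\<close>.

  The recursion shows that \<open>\<R>(P\<^sub>n)\<close> consists of a block of generators divisible by
  \<open>x\<^sub>v\<close> followed by a block of generators not involving \<open>x\<^sub>v\<close>, and that \<open>x\<^sub>v u\<^sub>i\<close>
  is a multiple of a generator of the first block for every \<open>u\<^sub>i\<close> of the second: for
  \<open>n \<ge> 5\<close> such a \<open>u\<^sub>i\<close> is \<open>x\<^sub>n x\<^sub>n\<^sub>-\<^sub>2 w\<close> with \<open>w \<in> \<R>(P\<^sub>n\<^sub>-\<^sub>3)\<close>, the support of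
  \<open>x\<^sub>n\<^sub>-\<^sub>2 w\<close> is a vertex cover of \<open>P\<^sub>n\<^sub>-\<^sub>2\<close>, and every vertex cover of a path contains
  the support of an element of its rooted list. Hence \<open>x\<^sub>v\<close> lies in both colon ideals.
  Conversely, if \<open>f u\<^sub>i \<in> (u\<^sub>1, \<dots>, u\<^sub>i\<^sub>-\<^sub>1)\<close>, setting \<open>x\<^sub>v = 0\<close> kills the first block
  and fixes the second, so \<open>f(0) \<in> (u\<^sub>k, \<dots>, u\<^sub>i\<^sub>-\<^sub>1) : u\<^sub>i\<close> while \<open>f - f(0) \<in> (x\<^sub>v)\<close>.\<close>

lemma poly_mapping_single_induct [case_names zero single add]:
  fixes P :: "('a \<Rightarrow>\<^sub>0 'b::comm_monoid_add) \<Rightarrow> bool"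
  assumes "P 0" "\<And>k a. P (Poly_Mapping.single k a)" "\<And>f g. P f \<Longrightarrow> P g \<Longrightarrow> P (f + g)"
  shows "P f"
proof (induction f rule: Poly_Mapping.update_induct)
  case const
  then show ?case using assms(1) .
next
  case (update f a b)
  have "Poly_Mapping.update a b f = f + Poly_Mapping.single a b"
    using update(1)
    by (intro poly_mapping_eqI)
      (auto simp: lookup_update lookup_add lookup_single in_keys_iff when_def)
  then show ?case using update assms by simp
qed

definition subst_zero :: "nat \<Rightarrow> 'a::field mpoly \<Rightarrow> 'a mpoly" where
  "subst_zero v p =
    Abs_poly_mapping (\<lambda>m. if Poly_Mapping.lookup m v = 0 then Poly_Mapping.lookup p m else 0)"

lemma lookup_subst_zero:
  "Poly_Mapping.lookup (subst_zero v p) m =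
    (if Poly_Mapping.lookup m v = 0 then Poly_Mapping.lookup p m else 0)"
proof -
  have "finite {m. (if Poly_Mapping.lookup m v = 0 then Poly_Mapping.lookup p m else 0) \<noteq> 0}"
    by (rule finite_subset[OF _ finite_lookup[of p]]) auto
  then show ?thesis unfolding subst_zero_def by simp
qed

lemma subst_zero_add: "subst_zero v (p + q) = subst_zero v p + subst_zero v q"
  by (intro poly_mapping_eqI) (simp add: lookup_subst_zero lookup_add)

lemma subst_zero_zero [simp]: "subst_zero v 0 = 0"
  by (intro poly_mapping_eqI) (simp add: lookup_subst_zero)

lemma subst_zero_single:
  "subst_zero v (Poly_Mapping.single m c) =
    (if Poly_Mapping.lookup m v = 0 then Poly_Mapping.single m c else 0)"
  by (intro poly_mapping_eqI) (auto simp: lookup_subst_zero lookup_single when_def)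

lemma subst_zero_one [simp]: "subst_zero v 1 = 1"
  by (metis single_one subst_zero_single lookup_zero)

lemma subst_zero_mult: "subst_zero v (p * q) = subst_zero v p * subst_zero v q"
proof (induction p rule: poly_mapping_single_induct)
  case (single m a)
  show ?case
    by (induction q rule: poly_mapping_single_induct)
      (simp_all add: distrib_left subst_zero_add mult_single subst_zero_single lookup_add)
qed (simp_all add: distrib_right subst_zero_add)

lemma subst_zero_sum: "subst_zero v (\<Sum>g\<in>F. f g) = (\<Sum>g\<in>F. subst_zero v (f g))"
  by (induction F rule: infinite_finite_induct) (auto simp: subst_zero_add)

lemma subst_zero_prod: "subst_zero v (\<Prod>i\<in>S. f i) = (\<Prod>i\<in>S. subst_zero v (f i))"
  by (induction S rule: infinite_finite_induct) (auto simp: subst_zero_mult)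

lemma subst_zero_xvar: "subst_zero v (xvar i) = (if i = v then 0 else xvar i)"
  by (simp add: xvar_def subst_zero_single lookup_single when_def)

lemma xvar_dvd_diff_subst_zero: "xvar v dvd p - subst_zero v p"
proof (induction p rule: poly_mapping_single_induct)
  case (add f g)
  have "f + g - subst_zero v (f + g) = (f - subst_zero v f) + (g - subst_zero v g)"
    by (simp add: subst_zero_add)
  then show ?case using add by (metis dvd_add)
next
  case (single m c)
  show ?case
  proof (cases "Poly_Mapping.lookup m v = 0")
    case False
    then have "Poly_Mapping.single v 1 + (m - Poly_Mapping.single v 1) = m"
      by (intro poly_mapping_eqI) (auto simp: lookup_add lookup_minus lookup_single when_def)
    then have "Poly_Mapping.single m c = xvar v * Poly_Mapping.single (m - Poly_Mapping.single v 1) c"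
      by (simp add: xvar_def mult_single)
    moreover have "subst_zero v (Poly_Mapping.single m c) = 0"
      using False by (simp add: subst_zero_single)
    ultimately show ?thesis by (metis diff_zero dvd_triv_left)
  qed (simp add: subst_zero_single)
qed simp

lemma subst_zero_eq_0_iff: "subst_zero v p = 0 \<longleftrightarrow> xvar v dvd p"
proof
  assume "subst_zero v p = 0"
  then show "xvar v dvd p" using xvar_dvd_diff_subst_zero[of v p] by simp
next
  assume "xvar v dvd p"
  then show "subst_zero v p = 0" by (auto simp: subst_zero_mult subst_zero_xvar)
qed

lemma xvar_nonzero: "(xvar i :: 'a::field mpoly) \<noteq> 0"
  by (metis keys_single one_neq_zero insert_not_empty keys_zero xvar_def)

lemma sqmono_nonzero: "finite S \<Longrightarrow> (sqmono S :: 'a::field mpoly) \<noteq> 0"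
  by (simp add: sqmono_def xvar_nonzero)

lemma subst_zero_sqmono:
  "finite S \<Longrightarrow> subst_zero v (sqmono S) = (if v \<in> S then 0 else sqmono S)"
  unfolding sqmono_def subst_zero_prod by (auto simp: subst_zero_xvar intro: prod.cong)

lemma ideal_genI: "finite F \<Longrightarrow> F \<subseteq> G \<Longrightarrow> (\<Sum>g\<in>F. c g * g) \<in> ideal_gen G"
  unfolding ideal_gen_def by blast

lemma ideal_genE:
  assumes "p \<in> ideal_gen G"
  obtains F c where "finite F" "F \<subseteq> G" "p = (\<Sum>g\<in>F. c g * g)"
  using assms unfolding ideal_gen_def by blast

lemma zero_in_ideal_gen: "0 \<in> ideal_gen G"
  using ideal_genI[of "{}"] by simp

lemma generator_in_ideal_gen: "g \<in> G \<Longrightarrow> g \<in> ideal_gen G"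
  using ideal_genI[of "{g}" G "\<lambda>_. 1"] by simp

lemma ideal_gen_add:
  assumes "a \<in> ideal_gen G" "b \<in> ideal_gen G"
  shows "a + b \<in> ideal_gen G"
proof -
  obtain F1 c1 where F1: "finite F1" "F1 \<subseteq> G" "a = (\<Sum>g\<in>F1. c1 g * g)"
    using assms(1) by (rule ideal_genE)
  obtain F2 c2 where F2: "finite F2" "F2 \<subseteq> G" "b = (\<Sum>g\<in>F2. c2 g * g)"
    using assms(2) by (rule ideal_genE)
  define c where "c g = (if g \<in> F1 then c1 g else 0) + (if g \<in> F2 then c2 g else 0)" for g
  have "a = (\<Sum>g\<in>F1 \<union> F2. (if g \<in> F1 then c1 g else 0) * g)"
    unfolding F1(3) using F1 F2 by (intro sum.mono_neutral_cong_left) auto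
  moreover have "b = (\<Sum>g\<in>F1 \<union> F2. (if g \<in> F2 then c2 g else 0) * g)"
    unfolding F2(3) using F1 F2 by (intro sum.mono_neutral_cong_left) auto
  ultimately have "a + b = (\<Sum>g\<in>F1 \<union> F2. c g * g)"
    by (simp add: c_def distrib_right sum.distrib)
  then show ?thesis using F1 F2 by (simp add: ideal_genI)
qed

lemma ideal_gen_mult: "p \<in> ideal_gen G \<Longrightarrow> q * p \<in> ideal_gen G"
proof (elim ideal_genE)
  fix F c assume F: "finite F" "F \<subseteq> G" and p: "p = (\<Sum>g\<in>F. c g * g)"
  have "q * p = (\<Sum>g\<in>F. (q * c g) * g)"
    by (simp add: p sum_distrib_left mult.assoc)
  then show ?thesis using F by (simp add: ideal_genI)
qed

lemma dvd_generator_in_ideal_gen: "g \<in> G \<Longrightarrow> g dvd p \<Longrightarrow> p \<in> ideal_gen G"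
proof (elim dvdE)
  fix c assume "g \<in> G" "p = g * c"
  then show "p \<in> ideal_gen G"
    using ideal_gen_mult[OF generator_in_ideal_gen, of g G c] by (simp add: mult.commute)
qed

lemma ideal_gen_sum: "(\<And>x. x \<in> F \<Longrightarrow> f x \<in> ideal_gen G) \<Longrightarrow> (\<Sum>x\<in>F. f x) \<in> ideal_gen G"
  by (induction F rule: infinite_finite_induct) (auto simp: zero_in_ideal_gen ideal_gen_add)

lemma ideal_gen_mono: "G \<subseteq> H \<Longrightarrow> ideal_gen G \<subseteq> ideal_gen H"
  unfolding ideal_gen_def by blast

lemma ideal_gen_singleton: "p \<in> ideal_gen {u} \<longleftrightarrow> u dvd p"
proof
  assume "p \<in> ideal_gen {u}"
  then obtain F c where "F \<subseteq> {u}" "p = (\<Sum>g\<in>F. c g * g)" by (rule ideal_genE)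
  moreover have "F = {} \<or> F = {u}" using \<open>F \<subseteq> {u}\<close> by blast
  ultimately show "u dvd p" by (elim disjE) simp_all
next
  assume "u dvd p"
  then show "p \<in> ideal_gen {u}" by (simp add: dvd_generator_in_ideal_gen)
qed

lemma ideal_gen_empty: "ideal_gen {} = {0}"
  unfolding ideal_gen_def by auto

lemma subst_zero_in_ideal_gen:
  assumes "p \<in> ideal_gen G" "\<And>g. g \<in> G \<Longrightarrow> subst_zero v g \<in> ideal_gen H"
  shows "subst_zero v p \<in> ideal_gen H"
  using assms(1)
proof (rule ideal_genE)
  fix F c assume "finite F" "F \<subseteq> G" "p = (\<Sum>g\<in>F. c g * g)"
  then show ?thesis
    using assms(2) by (auto simp: subst_zero_sum subst_zero_mult intro!: ideal_gen_sum ideal_gen_mult)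
qed

lemma ideal_colon_singleton:
  "f \<in> ideal_colon (ideal_gen G) (ideal_gen {u}) \<longleftrightarrow> f * u \<in> ideal_gen G"
proof
  assume "f \<in> ideal_colon (ideal_gen G) (ideal_gen {u})"
  then show "f * u \<in> ideal_gen G"
    unfolding ideal_colon_def by (simp add: ideal_gen_singleton)
next
  assume fu: "f * u \<in> ideal_gen G"
  have "f * (u * c) \<in> ideal_gen G" for c
    using ideal_gen_mult[OF fu, of c] by (simp add: ac_simps)
  then show "f \<in> ideal_colon (ideal_gen G) (ideal_gen {u})"
    unfolding ideal_colon_def by (auto simp: ideal_gen_singleton elim!: dvdE)
qed

lemma ideal_colon_xvar_split:
  fixes G H :: "'a::field mpoly set"
  assumes G: "\<And>g. g \<in> G \<Longrightarrow> subst_zero v g = 0"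
    and H: "\<And>h. h \<in> H \<Longrightarrow> subst_zero v h = h"
    and u: "subst_zero v u = u" "xvar v * u \<in> ideal_gen G"
  shows "ideal_colon (ideal_gen (G \<union> H)) (ideal_gen {u})
    = ideal_sum (ideal_gen {xvar v}) (ideal_colon (ideal_gen H) (ideal_gen {u}))"
proof (intro equalityI subsetI)
  fix f assume "f \<in> ideal_colon (ideal_gen (G \<union> H)) (ideal_gen {u})"
  then have "f * u \<in> ideal_gen (G \<union> H)" by (simp add: ideal_colon_singleton)
  then have "subst_zero v (f * u) \<in> ideal_gen H"
    by (rule subst_zero_in_ideal_gen) (auto simp: G H zero_in_ideal_gen generator_in_ideal_gen)
  then have "subst_zero v f \<in> ideal_colon (ideal_gen H) (ideal_gen {u})"
    by (simp add: ideal_colon_singleton subst_zero_mult u(1))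
  moreover have "f - subst_zero v f \<in> ideal_gen {xvar v}"
    by (simp add: ideal_gen_singleton xvar_dvd_diff_subst_zero)
  moreover have "f = (f - subst_zero v f) + subst_zero v f" by simp
  ultimately show "f \<in> ideal_sum (ideal_gen {xvar v}) (ideal_colon (ideal_gen H) (ideal_gen {u}))"
    unfolding ideal_sum_def by blast
next
  fix f assume "f \<in> ideal_sum (ideal_gen {xvar v}) (ideal_colon (ideal_gen H) (ideal_gen {u}))"
  then obtain a b where f: "f = a + b" and "xvar v dvd a" and "b * u \<in> ideal_gen H"
    unfolding ideal_sum_def by (auto simp: ideal_gen_singleton ideal_colon_singleton)
  from \<open>xvar v dvd a\<close> obtain c where "a = xvar v * c" by (rule dvdE)
  then have "a * u = c * (xvar v * u)" by (simp add: ac_simps)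
  then have "a * u \<in> ideal_gen G" using ideal_gen_mult[OF u(2)] by metis
  then have "a * u \<in> ideal_gen (G \<union> H)" using ideal_gen_mono[of G "G \<union> H"] by blast
  moreover have "b * u \<in> ideal_gen (G \<union> H)"
    using \<open>b * u \<in> ideal_gen H\<close> ideal_gen_mono[of H "G \<union> H"] by blast
  ultimately show "f \<in> ideal_colon (ideal_gen (G \<union> H)) (ideal_gen {u})"
    by (simp add: ideal_colon_singleton f distrib_right ideal_gen_add)
qed

lemma ideal_colon_eq_xvar:
  fixes G :: "'a::field mpoly set"
  assumes "\<And>g. g \<in> G \<Longrightarrow> subst_zero v g = 0"
    and "subst_zero v u = u" "xvar v * u \<in> ideal_gen G" "u \<noteq> 0"
  shows "ideal_colon (ideal_gen G) (ideal_gen {u}) = ideal_gen {xvar v}"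
proof -
  have "ideal_colon (ideal_gen {}) (ideal_gen {u}) = {0}"
    using \<open>u \<noteq> 0\<close> ideal_colon_singleton[of _ "{}" u] by (auto simp: ideal_gen_empty)
  moreover have "ideal_sum I {0} = I" for I :: "'a mpoly set"
    unfolding ideal_sum_def by auto
  ultimately show ?thesis
    using ideal_colon_xvar_split[of G v "{}" u] assms by simp
qed

definition path_cover :: "nat \<Rightarrow> nat set \<Rightarrow> bool" where
  "path_cover m C \<longleftrightarrow> (\<forall>i. 1 \<le> i \<and> i < m \<longrightarrow> i \<in> C \<or> Suc i \<in> C)"

lemma path_cover_0 [simp]: "path_cover 0 C"
  by (simp add: path_cover_def)

lemma path_cover_Suc:
  "path_cover (Suc m) C \<longleftrightarrow> path_cover m C \<and> (1 \<le> m \<longrightarrow> m \<in> C \<or> Suc m \<in> C)"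
  unfolding path_cover_def by (auto simp: less_Suc_eq)

lemma path_cover_edge: "path_cover m C \<Longrightarrow> 1 \<le> i \<Longrightarrow> i < m \<Longrightarrow> i \<in> C \<or> Suc i \<in> C"
  unfolding path_cover_def by blast

lemma path_cover_le: "path_cover m C \<Longrightarrow> m' \<le> m \<Longrightarrow> path_cover m' C"
  unfolding path_cover_def by auto

lemma path_cover_UNIV: "path_cover m UNIV"
  by (simp add: path_cover_def)

lemma rooted_sets_step:
  "rooted_sets (m + 5) = map (insert (m + 4)) (rooted_sets (m + 3))
     @ map (\<lambda>S. insert (m + 5) (insert (m + 3) S)) (rooted_sets (m + 2))"
  using rooted_sets.simps(6)[of m] by (simp add: numeral_eq_Suc)

lemma rooted_set_is_path_cover:
  "T \<in> set (rooted_sets m) \<Longrightarrow> T \<subseteq> {..m} \<and> path_cover m T"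
proof (induction m arbitrary: T rule: less_induct)
  case (less m)
  show ?case
  proof (cases "m < 5")
    case True
    then consider "m = 0" | "m = 1" | "m = 2" | "m = 3" | "m = 4" by linarith
    then show ?thesis
      using less.prems by cases (auto simp: numeral_eq_Suc path_cover_Suc)
  next
    case False
    then obtain j where m: "m = j + 5" by (metis add.commute le_Suc_ex not_less)
    from less.prems consider
        S where "S \<in> set (rooted_sets (j + 3))" "T = insert (j + 4) S"
      | S where "S \<in> set (rooted_sets (j + 2))" "T = insert (j + 5) (insert (j + 3) S)"
      unfolding m rooted_sets_step by auto
    then show ?thesis
    proof cases
      case 1
      with less.IH[of "j + 3" S] have "S \<subseteq> {..j + 3}" "path_cover (j + 3) S"
        by (auto simp: m)
      with 1 show ?thesis
        by (auto simp: m path_cover_def less_Suc_eq)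
    next
      case 2
      with less.IH[of "j + 2" S] have "S \<subseteq> {..j + 2}" "path_cover (j + 2) S"
        by (auto simp: m)
      with 2 show ?thesis
        by (auto simp: m path_cover_def less_Suc_eq)
    qed
  qed
qed

lemma path_cover_contains_rooted_set:
  "2 \<le> m \<Longrightarrow> path_cover m C \<Longrightarrow> \<exists>T\<in>set (rooted_sets m). T \<subseteq> C"
proof (induction m arbitrary: C rule: less_induct)
  case (less m)
  show ?case
  proof (cases "m < 5")
    case True
    with less.prems(1) consider "m = 2" | "m = 3" | "m = 4" by linarith
    then show ?thesis
      using less.prems(2) by cases (auto simp: numeral_eq_Suc path_cover_Suc)
  next
    case False
    then obtain j where m: "m = j + 5" by (metis add.commute le_Suc_ex not_less)
    from path_cover_edge[OF less.prems(2), of "j + 3"] path_cover_edge[OF less.prems(2), of "j + 4"]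
    have edges: "j + 3 \<in> C \<or> j + 4 \<in> C" "j + 4 \<in> C \<or> j + 5 \<in> C"
      by (simp_all add: m add.commute)
    show ?thesis
    proof (cases "j + 4 \<in> C")
      case True
      obtain S where "S \<in> set (rooted_sets (j + 3))" "S \<subseteq> C"
        using less.IH[of "j + 3" C] less.prems(2) path_cover_le by (auto simp: m)
      with True show ?thesis
        unfolding m rooted_sets_step by (intro bexI[of _ "insert (j + 4) S"]) auto
    next
      case False
      obtain S where "S \<in> set (rooted_sets (j + 2))" "S \<subseteq> C"
        using less.IH[of "j + 2" C] less.prems(2) path_cover_le by (auto simp: m)
      with False edges show ?thesis
        unfolding m rooted_sets_step by (intro bexI[of _ "insert (j + 5) (insert (j + 3) S)"]) auto
    qed
  qed
qed

lemma rooted_sets_split: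
  assumes "2 \<le> n"
  defines "L \<equiv> rooted_sets n"
  obtains k where "k < length L" "\<forall>S\<in>set (take k L). n - 1 \<in> S"
    "\<forall>S\<in>set (drop k L). n - 1 \<notin> S \<and> (\<exists>T\<in>set (take k L). T \<subseteq> insert (n - 1) S)"
proof (cases "n < 5")
  case True
  with assms(1) consider "n = 2" | "n = 3" | "n = 4" by linarith
  then show ?thesis
  proof cases
    case 1
    then show ?thesis using that[of 1] by (simp add: L_def numeral_eq_Suc)
  next
    case 2
    then show ?thesis using that[of 1] by (simp add: L_def numeral_eq_Suc)
  next
    case 3
    then show ?thesis using that[of 2] by (simp add: L_def numeral_eq_Suc)
  qed
next
  case False
  then obtain j where n: "n = j + 5" by (metis add.commute le_Suc_ex not_less)
  define A where "A = map (insert (j + 4)) (rooted_sets (j + 3))"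
  define B where "B = map (\<lambda>S. insert (j + 5) (insert (j + 3) S)) (rooted_sets (j + 2))"
  have L: "L = A @ B" and v: "n - 1 = j + 4"
    unfolding L_def n A_def B_def by (simp_all only: rooted_sets_step)
  have "B \<noteq> []"
    using path_cover_contains_rooted_set[OF _ path_cover_UNIV, of "j + 2"] by (auto simp: B_def)
  moreover have "\<forall>S\<in>set A. n - 1 \<in> S" unfolding A_def v by auto
  moreover have "n - 1 \<notin> S \<and> (\<exists>T\<in>set A. T \<subseteq> insert (n - 1) S)" if "S \<in> set B" for S
  proof -
    obtain U where S: "S = insert (j + 5) (insert (j + 3) U)" and U: "U \<in> set (rooted_sets (j + 2))"
      using \<open>S \<in> set B\<close> unfolding B_def by auto
    have "U \<subseteq> {..j + 2}" "path_cover (j + 2) U"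
      using rooted_set_is_path_cover[OF U] by auto
    then have "path_cover (j + 3) (insert (j + 3) U)"
      by (auto simp: path_cover_def less_Suc_eq)
    then obtain T where "T \<in> set (rooted_sets (j + 3))" "T \<subseteq> insert (j + 3) U"
      using path_cover_contains_rooted_set[of "j + 3"] by auto
    then have "insert (j + 4) T \<in> set A" "insert (j + 4) T \<subseteq> insert (n - 1) S"
      unfolding A_def S v by auto
    moreover have "n - 1 \<notin> S" using \<open>U \<subseteq> {..j + 2}\<close> unfolding S v by auto
    ultimately show ?thesis by blast
  qed
  ultimately show ?thesis
    using that[of "length A"] unfolding L by simp
qed

lemma sqmono_list_split:
  fixes Ls :: "nat set list"
  assumes fin: "\<forall>S\<in>set Ls. finite S"
    and pre: "\<forall>S\<in>set (take k Ls). v \<in> S"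
    and post: "\<forall>S\<in>set (drop k Ls). v \<notin> S \<and> (\<exists>T\<in>set (take k Ls). T \<subseteq> insert v S)"
  defines "us \<equiv> map sqmono Ls :: 'a::field mpoly list"
  shows "\<forall>g\<in>set (take k us). subst_zero v g = 0"
    and "\<forall>h\<in>set (drop k us).
           subst_zero v h = h \<and> h \<noteq> 0 \<and> xvar v * h \<in> ideal_gen (set (take k us))"
proof -
  show "\<forall>g\<in>set (take k us). subst_zero v g = 0"
  proof
    fix g assume "g \<in> set (take k us)"
    then obtain S where S: "S \<in> set (take k Ls)" and g: "g = sqmono S"
      unfolding us_def take_map by auto
    have "finite S" using fin in_set_takeD[OF S] by blast
    then show "subst_zero v g = 0" using pre S by (simp add: g subst_zero_sqmono)
  qed
  show "\<forall>h\<in>set (drop k us).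
          subst_zero v h = h \<and> h \<noteq> 0 \<and> xvar v * h \<in> ideal_gen (set (take k us))"
  proof
    fix h assume "h \<in> set (drop k us)"
    then obtain S where S: "S \<in> set (drop k Ls)" and h: "h = sqmono S"
      unfolding us_def drop_map by auto
    have "finite S" using fin in_set_dropD[OF S] by blast
    obtain T where T: "T \<in> set (take k Ls)" "T \<subseteq> insert v S" and "v \<notin> S"
      using post S by blast
    have "xvar v * h = sqmono (insert v S)"
      using \<open>finite S\<close> \<open>v \<notin> S\<close> by (simp add: h sqmono_def)
    moreover have "sqmono T dvd (sqmono (insert v S) :: 'a mpoly)"
      unfolding sqmono_def using T \<open>finite S\<close> by (intro prod_dvd_prod_subset) auto
    moreover have "sqmono T \<in> set (take k us)"
      using T(1) unfolding us_def take_map by simp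
    ultimately have "xvar v * h \<in> ideal_gen (set (take k us))"
      by (simp add: dvd_generator_in_ideal_gen)
    then show "subst_zero v h = h \<and> h \<noteq> 0 \<and> xvar v * h \<in> ideal_gen (set (take k us))"
      using \<open>finite S\<close> \<open>v \<notin> S\<close> by (simp add: h subst_zero_sqmono sqmono_nonzero)
  qed
qed

lemma Least_nth_not_eqI:
  assumes "k < length xs" "\<forall>x\<in>set (take k xs). P x" "\<not> P (xs ! k)"
  shows "(LEAST j. j < length xs \<and> \<not> P (xs ! j)) = k"
proof (rule Least_equality)
  fix j assume "j < length xs \<and> \<not> P (xs ! j)"
  moreover have "P (xs ! j)" if "j < k"
    using assms(1,2) that nth_mem[of j "take k xs"] by simp
  ultimately show "k \<le> j" by (meson not_le)
qed (use assms in simp)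

lemma rooted_list_split:
  assumes "2 \<le> n"
  defines "us \<equiv> rooted_list n :: 'a::field mpoly list"
  obtains k where "k < length us" "\<forall>g\<in>set (take k us). subst_zero (n - 1) g = 0"
    "\<forall>h\<in>set (drop k us).
       subst_zero (n - 1) h = h \<and> h \<noteq> 0 \<and> xvar (n - 1) * h \<in> ideal_gen (set (take k us))"
proof -
  obtain k where "k < length (rooted_sets n)"
    and "\<forall>S\<in>set (take k (rooted_sets n)). n - 1 \<in> S"
    and "\<forall>S\<in>set (drop k (rooted_sets n)). n - 1 \<notin> S
           \<and> (\<exists>T\<in>set (take k (rooted_sets n)). T \<subseteq> insert (n - 1) S)"
    using rooted_sets_split[OF assms(1)] by blast
  moreover have "\<forall>S\<in>set (rooted_sets n). finite S"
    using rooted_set_is_path_cover finite_subset by blast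
  ultimately show ?thesis
    using that sqmono_list_split[where 'a='a] by (simp add: us_def rooted_list_def)
qed

lemma nth_in_set_drop: "k \<le> i \<Longrightarrow> i < length xs \<Longrightarrow> xs ! i \<in> set (drop k xs)"
  using nth_mem[of "i - k" "drop k xs"] by simp

lemma set_take_eq_Un_drop_take:
  "k \<le> i \<Longrightarrow> set (take i xs) = set (take k xs) \<union> set (drop k (take i xs))"
  by (metis append_take_drop_id min.absorb1 set_append take_take)

theorem lemma3p6:
  fixes n :: nat and k :: nat and us :: "'a::field mpoly list"
  assumes "n \<ge> 2"
    and "us = rooted_list n"
    and "k = (LEAST j. j < length us \<and> \<not> xvar (n - 1) dvd us ! j)"
  shows "ideal_colon (ideal_gen (set (take k us))) (ideal_gen {us ! k})
           = ideal_gen {xvar (n - 1)}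
         \<and> (\<forall>i. k < i \<and> i < length us \<longrightarrow>
           ideal_colon (ideal_gen (set (take i us))) (ideal_gen {us ! i})
           = ideal_sum (ideal_gen {xvar (n - 1)})
               (ideal_colon (ideal_gen (set (drop k (take i us)))) (ideal_gen {us ! i})))"
proof -
  obtain k0 where k0: "k0 < length us"
    and split: "\<forall>g\<in>set (take k0 us). subst_zero (n - 1) g = 0"
      "\<forall>h\<in>set (drop k0 us).
         subst_zero (n - 1) h = h \<and> h \<noteq> 0 \<and> xvar (n - 1) * h \<in> ideal_gen (set (take k0 us))"
    using rooted_list_split[OF assms(1)] assms(2) by blast
  have "k = k0"
    unfolding assms(3) using split nth_in_set_drop[OF order_refl k0] k0
    by (intro Least_nth_not_eqI) (auto simp: subst_zero_eq_0_iff[symmetric])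
  show ?thesis
  proof (intro conjI allI impI)
    show "ideal_colon (ideal_gen (set (take k us))) (ideal_gen {us ! k}) = ideal_gen {xvar (n - 1)}"
      using split nth_in_set_drop[OF order_refl k0] \<open>k = k0\<close> by (intro ideal_colon_eq_xvar) auto
  next
    fix i assume i: "k < i \<and> i < length us"
    then have take_i: "set (take i us) = set (take k us) \<union> set (drop k (take i us))"
      by (simp add: set_take_eq_Un_drop_take)
    have "set (drop k (take i us)) \<subseteq> set (drop k us)"
      by (metis drop_take set_take_subset)
    then show "ideal_colon (ideal_gen (set (take i us))) (ideal_gen {us ! i})
      = ideal_sum (ideal_gen {xvar (n - 1)})
          (ideal_colon (ideal_gen (set (drop k (take i us)))) (ideal_gen {us ! i}))"
      unfolding take_i using i split nth_in_set_drop[of k0 i us] \<open>k = k0\<close>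
      by (intro ideal_colon_xvar_split) auto
  qed
qed

end
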